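(* Let $d=\infty$, $C>0$, and let ${\boldsymbol\gamma}$ be product weights with $\sum_{j\in\mathbb N}\gamma_j<\infty$, and let $p=\mathrm{decay}((\gamma_j)_{j\in\mathbb N})$. Then $$\mathrm{decay}(T^\uparrow_{\infty,C}{\boldsymbol\gamma})=\mathrm{decay}({\boldsymbol\gamma})=p.$$
   Context: $\mathcal U_\infty$ is the set of finite subsets of $\mathbb N$; weights are families $(\gamma_u)_{u\in\mathcal U_\infty}$ of non-negative reals. Product weights: $\gamma_u=\prod_{j\in u}\gamma_j$ ($\gamma_\emptyset=1$) for a non-increasing sequence $(\gamma_j)_{j\in\mathbb N}$ of non-negative reals. For a family $(a_v)_{v\in V}$ of non-negative reals over a countably infinite index set, $\mathrm{decay}((a_v))=\sup\{\tau>0:\sum_va_v^{1/\tau}<\infty\}$, $\sup\emptyset=0$. For $C>0$: $(T^\uparrow_{\infty,C}{\boldsymbol\gamma})_u=\sum_{v\in\mathcal U_\infty,\,v\supseteq u}C^{2|v|}\gamma_v$ (well defined since $\sum_vC^{2|v|}\gamma_v<\infty$ here). *)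

theory Defs
  imports "HOL-Analysis.Analysis" "HOL-Library.Extended_Real"
begin

definition U_inf :: "nat set set" where
  "U_inf = {u. finite u}"

text \<open>decay of a non-negative family a over an index set V:
  sup of tau > 0 with sum of a_v^(1/tau) finite; sup of the empty set is 0.
  Values in ereal since the supremum may be infinite.\<close>
definition decay :: "'a set \<Rightarrow> ('a \<Rightarrow> real) \<Rightarrow> ereal" where
  "decay V a = Sup (insert 0 (ereal ` {\<tau>::real. \<tau> > 0 \<and> (\<lambda>v. a v powr (1 / \<tau>)) summable_on V}))"

definition prod_weights :: "(nat \<Rightarrow> real) \<Rightarrow> nat set \<Rightarrow> real" where
  "prod_weights g u = (\<Prod>j\<in>u. g j)"

definition T_up_inf :: "real \<Rightarrow> (nat set \<Rightarrow> real) \<Rightarrow> nat set \<Rightarrow> real" where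
  "T_up_inf C w u = (\<Sum>\<^sub>\<infinity>v\<in>{v\<in>U_inf. u \<subseteq> v}. C ^ (2 * card v) * w v)"

end

theory Submission
  imports Defs
begin

text \<open>
  For non-negative \<open>a\<close>, the product weights \<open>\<Prod>j\<in>u. a j\<close> are summable over the finite sets \<open>u\<close>
  exactly when \<open>a\<close> is summable: singletons give one direction, and
  \<open>\<Sum>u\<subseteq>J. \<Prod>j\<in>u. a j = \<Prod>j\<in>J. (1 + a j) \<le> exp (\<Sum>j\<in>J. a j)\<close> the other.
  Since \<open>(\<Prod>j\<in>u. \<gamma> j) powr s = \<Prod>j\<in>u. \<gamma> j powr s\<close>, this identifies the decay of the product
  weights with that of \<open>\<gamma>\<close>. With \<open>h j = C\<^sup>2 * \<gamma> j\<close>, the upward sum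
  \<open>T u = \<Sum>v\<supseteq>u. \<Prod>j\<in>v. h j\<close> lies between \<open>\<Prod>j\<in>u. h j\<close> and \<open>(\<Prod>j\<in>u. h j) * \<Sum>w. \<Prod>j\<in>w. h j\<close>,
  so \<open>T\<close> has the decay of the product weights of \<open>h\<close>, which is that of \<open>\<gamma>\<close>.
\<close>

lemma sum_prod_le_exp_infsum:
  fixes a :: "'a \<Rightarrow> real"
  assumes nonneg: "\<And>j. a j \<ge> 0" and summable: "a summable_on UNIV"
    and F: "finite F" "F \<subseteq> {u. finite u}"
  shows "(\<Sum>u\<in>F. \<Prod>j\<in>u. a j) \<le> exp (\<Sum>\<^sub>\<infinity>j. a j)"
proof -
  define J where "J = \<Union>F"
  have "finite J" using F by (auto simp: J_def)
  have "(\<Sum>u\<in>F. \<Prod>j\<in>u. a j) \<le> (\<Sum>u\<in>Pow J. \<Prod>j\<in>u. a j)"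
    using \<open>finite J\<close> nonneg by (intro sum_mono2) (auto simp: J_def prod_nonneg)
  also have "\<dots> = (\<Prod>j\<in>J. 1 + a j)"
    using prod_add[OF \<open>finite J\<close>, of a "\<lambda>_. 1"] by (simp add: add.commute)
  also have "\<dots> \<le> exp (\<Sum>j\<in>J. a j)"
    using nonneg by (rule prod_le_exp_sum)
  also have "\<dots> \<le> exp (\<Sum>\<^sub>\<infinity>j. a j)"
    using finite_sum_le_infsum[OF summable \<open>finite J\<close>] nonneg by simp
  finally show ?thesis .
qed

lemma summable_on_finite_subsets_prod_iff:
  fixes a :: "'a \<Rightarrow> real"
  assumes nonneg: "\<And>j. a j \<ge> 0"
  shows "(\<lambda>u. \<Prod>j\<in>u. a j) summable_on {u. finite u} \<longleftrightarrow> a summable_on UNIV"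
proof
  assume "(\<lambda>u. \<Prod>j\<in>u. a j) summable_on {u. finite u}"
  then have "(\<lambda>u. \<Prod>j\<in>u. a j) summable_on range (\<lambda>j. {j})"
    by (rule summable_on_subset_banach) auto
  then show "a summable_on UNIV"
    by (subst (asm) summable_on_reindex) (auto simp: inj_on_def o_def)
next
  assume "a summable_on UNIV"
  then show "(\<lambda>u. \<Prod>j\<in>u. a j) summable_on {u. finite u}"
    using nonneg sum_prod_le_exp_infsum
    by (intro nonneg_bdd_above_summable_on bdd_aboveI2) (auto simp: prod_nonneg)
qed

lemma prod_le_infsum_supersets:
  fixes h :: "'a \<Rightarrow> real"
  assumes nonneg: "\<And>j. h j \<ge> 0" and summable: "h summable_on UNIV" and "finite u"
  shows "(\<Prod>j\<in>u. h j) \<le> (\<Sum>\<^sub>\<infinity>v\<in>{v. finite v \<and> u \<subseteq> v}. \<Prod>j\<in>v. h j)"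
proof -
  have "(\<lambda>v. \<Prod>j\<in>v. h j) summable_on {v. finite v}"
    using summable by (rule summable_on_finite_subsets_prod_iff[OF nonneg, THEN iffD2])
  then have "(\<lambda>v. \<Prod>j\<in>v. h j) summable_on {v. finite v \<and> u \<subseteq> v}"
    by (rule summable_on_subset_banach) auto
  from finite_sum_le_infsum[OF this, of "{u}"] show ?thesis
    using \<open>finite u\<close> nonneg by (auto simp: prod_nonneg)
qed

lemma infsum_supersets_le_prod:
  fixes h :: "'a \<Rightarrow> real"
  assumes nonneg: "\<And>j. h j \<ge> 0" and summable: "h summable_on UNIV" and "finite u"
  shows "(\<Sum>\<^sub>\<infinity>v\<in>{v. finite v \<and> u \<subseteq> v}. \<Prod>j\<in>v. h j)
           \<le> (\<Prod>j\<in>u. h j) * (\<Sum>\<^sub>\<infinity>w\<in>{w. finite w}. \<Prod>j\<in>w. h j)"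
proof -
  have summable_prod: "(\<lambda>v. \<Prod>j\<in>v. h j) summable_on {v. finite v}"
    using summable by (rule summable_on_finite_subsets_prod_iff[OF nonneg, THEN iffD2])
  show ?thesis
  proof (rule infsum_le_finite_sums)
    show "(\<lambda>v. \<Prod>j\<in>v. h j) summable_on {v. finite v \<and> u \<subseteq> v}"
      using summable_prod by (rule summable_on_subset_banach) auto
  next
    fix F assume F: "finite F" "F \<subseteq> {v. finite v \<and> u \<subseteq> v}"
    have "(\<Sum>v\<in>F. \<Prod>j\<in>v. h j) = (\<Prod>j\<in>u. h j) * (\<Sum>v\<in>F. \<Prod>j\<in>v - u. h j)"
      unfolding sum_distrib_left
      using F by (intro sum.cong) (auto simp: prod.subset_diff mult.commute)
    also have "(\<Sum>v\<in>F. \<Prod>j\<in>v - u. h j) = (\<Sum>w\<in>(\<lambda>v. v - u) ` F. \<Prod>j\<in>w. h j)"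
      using F by (subst sum.reindex) (auto simp: inj_on_def)
    also have "\<dots> \<le> (\<Sum>\<^sub>\<infinity>w\<in>{w. finite w}. \<Prod>j\<in>w. h j)"
      using F nonneg by (intro finite_sum_le_infsum[OF summable_prod]) (auto simp: prod_nonneg)
    finally show "(\<Sum>v\<in>F. \<Prod>j\<in>v. h j) \<le> (\<Prod>j\<in>u. h j) * (\<Sum>\<^sub>\<infinity>w\<in>{w. finite w}. \<Prod>j\<in>w. h j)"
      using nonneg by (simp add: mult_left_mono prod_nonneg)
  qed
qed

lemma summable_on_powr_iff_if_comparable:
  fixes a b :: "'a \<Rightarrow> real"
  assumes a_nonneg: "\<And>x. x \<in> A \<Longrightarrow> 0 \<le> a x" and a_le_b: "\<And>x. x \<in> A \<Longrightarrow> a x \<le> b x"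
    and b_le_Ka: "\<And>x. x \<in> A \<Longrightarrow> b x \<le> K * a x" and "K \<ge> 0" "s > 0"
  shows "(\<lambda>x. b x powr s) summable_on A \<longleftrightarrow> (\<lambda>x. a x powr s) summable_on A"
proof
  assume "(\<lambda>x. b x powr s) summable_on A"
  then show "(\<lambda>x. a x powr s) summable_on A"
  proof (rule summable_on_comparison_test)
    fix x assume "x \<in> A"
    then show "a x powr s \<le> b x powr s"
      using a_nonneg a_le_b \<open>s > 0\<close> by (intro powr_mono2) auto
  qed (rule powr_ge_zero)
next
  assume "(\<lambda>x. a x powr s) summable_on A"
  then have "(\<lambda>x. K powr s * a x powr s) summable_on A"
    by (rule summable_on_cmult_right)
  then show "(\<lambda>x. b x powr s) summable_on A"
  proof (rule summable_on_comparison_test)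
    fix x assume "x \<in> A"
    then have "0 \<le> b x"
      using a_nonneg a_le_b by (meson order_trans)
    then have "b x powr s \<le> (K * a x) powr s"
      using b_le_Ka \<open>x \<in> A\<close> \<open>s > 0\<close> by (intro powr_mono2) auto
    then show "b x powr s \<le> K powr s * a x powr s"
      using a_nonneg \<open>x \<in> A\<close> \<open>K \<ge> 0\<close> by (simp add: powr_mult)
  qed (rule powr_ge_zero)
qed

lemma decay_cong:
  assumes "\<And>\<tau>. \<tau> > 0 \<Longrightarrow>
             (\<lambda>v. a v powr (1 / \<tau>)) summable_on V \<longleftrightarrow> (\<lambda>w. b w powr (1 / \<tau>)) summable_on W"
  shows "decay V a = decay W b"
proof -
  have "{\<tau>. \<tau> > 0 \<and> (\<lambda>v. a v powr (1 / \<tau>)) summable_on V}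
          = {\<tau>. \<tau> > 0 \<and> (\<lambda>w. b w powr (1 / \<tau>)) summable_on W}"
    using assms by blast
  then show ?thesis
    by (simp add: decay_def)
qed

lemma summable_on_prod_weights_powr_iff:
  assumes "\<And>j. g j \<ge> 0"
  shows "(\<lambda>u. prod_weights g u powr s) summable_on U_inf \<longleftrightarrow> (\<lambda>j. g j powr s) summable_on UNIV"
proof -
  have "(\<lambda>u. prod_weights g u powr s) = (\<lambda>u. \<Prod>j\<in>u. g j powr s)"
    using assms by (simp add: prod_weights_def prod_powr_distrib)
  then show ?thesis
    unfolding U_inf_def by (simp add: summable_on_finite_subsets_prod_iff)
qed

lemma T_up_inf_prod_weights:
  "T_up_inf C (prod_weights g) u = (\<Sum>\<^sub>\<infinity>v\<in>{v. finite v \<and> u \<subseteq> v}. \<Prod>j\<in>v. C\<^sup>2 * g j)"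
proof -
  have "{v \<in> U_inf. u \<subseteq> v} = {v. finite v \<and> u \<subseteq> v}"
    by (auto simp: U_inf_def)
  then show ?thesis
    unfolding T_up_inf_def prod_weights_def by (simp add: prod.distrib power_mult)
qed

lemma summable_on_T_up_inf_powr_iff:
  assumes "C > 0" and nonneg: "\<And>j. g j \<ge> 0" and "g summable_on UNIV" and "s > 0"
  shows "(\<lambda>u. T_up_inf C (prod_weights g) u powr s) summable_on U_inf
           \<longleftrightarrow> (\<lambda>j. g j powr s) summable_on UNIV"
proof -
  define h where "h j = C\<^sup>2 * g j" for j
  define S where "S = (\<Sum>\<^sub>\<infinity>w\<in>{w. finite w}. \<Prod>j\<in>w. h j)"
  have h_nonneg: "h j \<ge> 0" for j
    using nonneg by (simp add: h_def)
  have h_summable: "h summable_on UNIV"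
    unfolding h_def using \<open>g summable_on UNIV\<close> by (rule summable_on_cmult_right)
  have "(\<lambda>u. T_up_inf C (prod_weights g) u powr s) summable_on U_inf
          \<longleftrightarrow> (\<lambda>u. prod_weights h u powr s) summable_on U_inf"
    unfolding prod_weights_def [of h]
  proof (rule summable_on_powr_iff_if_comparable[where K = S])
    fix u assume "u \<in> U_inf"
    then have "finite u"
      by (simp add: U_inf_def)
    have T_eq: "T_up_inf C (prod_weights g) u = (\<Sum>\<^sub>\<infinity>v\<in>{v. finite v \<and> u \<subseteq> v}. \<Prod>j\<in>v. h j)"
      unfolding T_up_inf_prod_weights h_def ..
    show "0 \<le> (\<Prod>j\<in>u. h j)"
      using h_nonneg by (simp add: prod_nonneg)
    show "(\<Prod>j\<in>u. h j) \<le> T_up_inf C (prod_weights g) u"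
      unfolding T_eq using h_nonneg h_summable \<open>finite u\<close> by (rule prod_le_infsum_supersets)
    show "T_up_inf C (prod_weights g) u \<le> S * (\<Prod>j\<in>u. h j)"
      unfolding T_eq S_def mult.commute[of _ "\<Prod>j\<in>u. h j"]
      using h_nonneg h_summable \<open>finite u\<close> by (rule infsum_supersets_le_prod)
  next
    show "S \<ge> 0"
      unfolding S_def using h_nonneg by (intro infsum_nonneg) (simp add: prod_nonneg)
  qed fact
  also have "\<dots> \<longleftrightarrow> (\<lambda>j. (C\<^sup>2) powr s * g j powr s) summable_on UNIV"
    using h_nonneg nonneg
    by (simp add: summable_on_prod_weights_powr_iff h_def powr_mult)
  also have "\<dots> \<longleftrightarrow> (\<lambda>j. g j powr s) summable_on UNIV"
    using \<open>C > 0\<close> by (intro summable_on_cmult_right') simp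
  finally show ?thesis .
qed

theorem mainTheorem11:
  fixes C :: real and g :: "nat \<Rightarrow> real" and p :: ereal
  assumes "C > 0"
    and "\<And>j. g j \<ge> 0"
    and "decseq g"
    and "summable g"
    and "p = decay (UNIV :: nat set) g"
  shows "decay U_inf (T_up_inf C (prod_weights g)) = decay U_inf (prod_weights g)
         \<and> decay U_inf (prod_weights g) = p"
proof -
  have "g summable_on UNIV"
    by (subst summable_on_UNIV_nonneg_real_iff) (use assms(2,4) in auto)
  have "decay U_inf (prod_weights g) = decay UNIV g"
    by (rule decay_cong, rule summable_on_prod_weights_powr_iff) (rule assms(2))
  moreover have "decay U_inf (T_up_inf C (prod_weights g)) = decay UNIV g"
    by (rule decay_cong, rule summable_on_T_up_inf_powr_iff)
       (use assms(1,2) \<open>g summable_on UNIV\<close> in simp_all)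
  ultimately show ?thesis
    using assms(5) by simp
qed

end
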